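(* Let $r\ge 2$ and $m\ge 7$ be integers. Then for every integer $n\ge m-1$, $$F_{n+2^{m-6},r}\equiv F_{n,r}\pmod{2^m},$$ i.e. from the term of index $m-1$ onward the sequence $(F_{n,r}\bmod 2^m)_{n\ge0}$ is periodic with period $2^{m-6}$.
   Context: For positive integers $r\le m\le n$, $S_r(n,m)$ denotes the $r$-Stirling number of the second kind: the number of partitions of $\{1,\dots,n\}$ into $m$ non-empty blocks such that $1,\dots,r$ lie in pairwise distinct blocks. For a positive integer $r$ and integer $n\ge 0$, the $r$-Fubini number is $F_{n,r}=\sum_{k=0}^{n}(k+r)!\,S_r(n+r,k+r)$. *)

theory Defs
  imports Main "HOL-Library.Disjoint_Sets"
begin

definition r_stirling :: "nat \<Rightarrow> nat \<Rightarrow> nat \<Rightarrow> nat" where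
  "r_stirling r n m = card {P. partition_on {1..n} P \<and> card P = m \<and>
     (\<forall>B\<in>P. \<forall>i\<in>{1..r}. \<forall>j\<in>{1..r}. i \<in> B \<and> j \<in> B \<longrightarrow> i = j)}"

definition r_fubini :: "nat \<Rightarrow> nat \<Rightarrow> nat" where
  "r_fubini n r = (\<Sum>k=0..n. fact (k + r) * r_stirling r (n + r) (k + r))"

end

theory Submission
  imports Defs "HOL-Number_Theory.Cong"
begin

(* Let f(x) = x^n (x)_r, with (x)_r the falling factorial. The r-Stirling recurrence gives
   x^n (x)_r = sum_j S_r(n+r, j) (x)_j, hence F_{n,r} = sum_k (Delta^k f)(0). Writing
   f = (1 + Delta) g with g(x) = f(x - 1) turns this sum into 2 sum_k (Delta^k g)(0) - f(-1);
   iterating m times gives F_{n,r} = - sum_{k=1..m} 2^(k-1) (-k)^n (-k)_r (mod 2^m).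
   Replacing n by n + 2^(m-6) changes each summand by a multiple of 2^m: for even k the factor
   (-k)^n with n >= m - 1 and the even factor (-k)_r supply it; for odd k, 2^(m-7) (k^2 - 1)
   divides k^(2^(m-6)) - 1 and k + 1 divides (-k)_r, which together with the weight 2^(k-1)
   suffices. *)

section \<open>Forward differences of falling factorials\<close>

definition fwd_diff :: "(int \<Rightarrow> int) \<Rightarrow> int \<Rightarrow> int" where
  "fwd_diff f = (\<lambda>x. f (x + 1) - f x)"

fun ffact :: "int \<Rightarrow> nat \<Rightarrow> int" where
  "ffact x 0 = 1"
| "ffact x (Suc j) = ffact x j * (x - int j)"

lemma ffact_Suc_shift: "ffact (x + 1) (Suc j) = (x + 1) * ffact x j"
  by (induction j) (simp_all add: algebra_simps)

lemma ffact_of_nat_eq_0: "j < k \<Longrightarrow> ffact (int j) k = 0"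
  by (induction k) (auto simp: less_Suc_eq)

lemma ffact_of_nat_self: "ffact (int k) k = fact k"
proof (induction k)
  case (Suc k)
  have "ffact (int k + 1) (Suc k) = (int k + 1) * ffact (int k) k" by (rule ffact_Suc_shift)
  then show ?case using Suc by (simp add: fact_Suc add.commute)
qed simp

lemma ffact_0_left: "ffact 0 j = (if j = 0 then 1 else 0)"
  by (induction j) auto

lemma ffact_dvd: "i \<le> j \<Longrightarrow> ffact x i dvd ffact x j"
  by (induction j) (auto simp: le_Suc_eq)

lemma fwd_diff_ffact: "fwd_diff (\<lambda>x. ffact x j) = (\<lambda>x. int j * ffact x (j - 1))"
proof (cases j)
  case (Suc i)
  have "ffact (x + 1) (Suc i) - ffact x (Suc i) = int (Suc i) * ffact x i" for x
    unfolding ffact_Suc_shift by (simp add: algebra_simps)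
  then show ?thesis using Suc by (simp add: fwd_diff_def fun_eq_iff del: ffact.simps(2))
qed (simp add: fwd_diff_def fun_eq_iff)

lemma fwd_diff_cmult: "fwd_diff (\<lambda>x. c * f x) = (\<lambda>x. c * fwd_diff f x)"
  by (simp add: fwd_diff_def algebra_simps)

lemma funpow_fwd_diff_ffact:
  "(fwd_diff ^^ k) (\<lambda>x. ffact x j) = (\<lambda>x. ffact (int j) k * ffact x (j - k))"
proof (induction k)
  case (Suc k)
  show ?case
  proof (cases "k \<le> j")
    case True
    then have "int (j - k) = int j - int k" by simp
    then show ?thesis
      using Suc by (simp add: fwd_diff_cmult fwd_diff_ffact algebra_simps)
  next
    case False
    then show ?thesis
      using Suc by (simp add: fwd_diff_cmult fwd_diff_def ffact_of_nat_eq_0)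
  qed
qed simp

lemma funpow_fwd_diff_sum:
  "(fwd_diff ^^ k) (\<lambda>x. \<Sum>j\<in>J. c j * g j x) = (\<lambda>x. \<Sum>j\<in>J. c j * (fwd_diff ^^ k) (g j) x)"
  by (induction k) (simp_all add: fwd_diff_def sum_subtractf[symmetric] right_diff_distrib)

lemma funpow_fwd_diff_shift:
  "(fwd_diff ^^ k) (\<lambda>x. f (x + c)) = (\<lambda>x. (fwd_diff ^^ k) f (x + c))"
  by (induction k) (simp_all add: fwd_diff_def algebra_simps)

definition newton_coeff_sum :: "nat \<Rightarrow> (int \<Rightarrow> int) \<Rightarrow> int" where
  "newton_coeff_sum N f = (\<Sum>k\<le>N. (fwd_diff ^^ k) f 0)"

lemma newton_coeff_sum_shift:
  assumes "(fwd_diff ^^ Suc N) f = (\<lambda>_. 0)"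
  shows "newton_coeff_sum N f = 2 * newton_coeff_sum N (\<lambda>x. f (x - 1)) - f (- 1)"
proof -
  define g where "g = (\<lambda>x. f (x - 1))"
  have g_diff: "(fwd_diff ^^ k) g = (\<lambda>x. (fwd_diff ^^ k) f (x - 1))" for k
    using funpow_fwd_diff_shift[of k f "- 1"] by (simp add: g_def)
  have "(fwd_diff ^^ k) f 0 = (fwd_diff ^^ k) g 0 + (fwd_diff ^^ Suc k) g 0" for k
    by (simp add: g_diff fwd_diff_def)
  then have "newton_coeff_sum N f = newton_coeff_sum N g + (\<Sum>k\<le>N. (fwd_diff ^^ Suc k) g 0)"
    by (simp add: newton_coeff_sum_def sum.distrib)
  also have "(\<Sum>k\<le>N. (fwd_diff ^^ Suc k) g 0) = newton_coeff_sum N g - g 0"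
    using sum.atMost_Suc_shift[of "\<lambda>k. (fwd_diff ^^ k) g 0" N] sum.atMost_Suc[of "\<lambda>k. (fwd_diff ^^ k) g 0" N]
      assms by (simp add: newton_coeff_sum_def g_diff)
  finally show ?thesis by (simp add: g_def)
qed

lemma newton_coeff_sum_shift_iter:
  assumes "(fwd_diff ^^ Suc N) f = (\<lambda>_. 0)"
  shows "newton_coeff_sum N f
    = 2 ^ K * newton_coeff_sum N (\<lambda>x. f (x - int K)) - (\<Sum>k=1..K. 2 ^ (k - 1) * f (- int k))"
proof (induction K)
  case (Suc K)
  have "(fwd_diff ^^ Suc N) (\<lambda>x. f (x + - int K)) = (\<lambda>_. 0)"
    by (simp only: funpow_fwd_diff_shift assms)
  from newton_coeff_sum_shift[OF this]
  have step: "newton_coeff_sum N (\<lambda>x. f (x - int K))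
    = 2 * newton_coeff_sum N (\<lambda>x. f (x - int (Suc K))) - f (- int (Suc K))"
    by (simp add: algebra_simps)
  show ?case unfolding Suc.IH step by (simp add: algebra_simps)
qed simp

lemma newton_coeff_sum_cong:
  assumes "(fwd_diff ^^ Suc N) f = (\<lambda>_. 0)"
  shows "[newton_coeff_sum N f = - (\<Sum>k=1..K. 2 ^ (k - 1) * f (- int k))] (mod 2 ^ K)"
  unfolding cong_iff_dvd_diff newton_coeff_sum_shift_iter[OF assms, of K] by simp

lemma funpow_fwd_diff_ffact_series:
  "(fwd_diff ^^ k) (\<lambda>x. \<Sum>j\<le>N. c j * ffact x j) = (\<lambda>x. \<Sum>j\<le>N. c j * (ffact (int j) k * ffact x (j - k)))"
  by (simp add: funpow_fwd_diff_sum funpow_fwd_diff_ffact)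

lemma funpow_fwd_diff_ffact_series_vanish:
  "(fwd_diff ^^ Suc N) (\<lambda>x. \<Sum>j\<le>N. c j * ffact x j) = (\<lambda>_. 0)"
  unfolding funpow_fwd_diff_ffact_series
  by (auto simp: ffact_of_nat_eq_0 simp del: ffact.simps(2) intro!: sum.neutral)

lemma newton_coeff_sum_ffact_series:
  "newton_coeff_sum N (\<lambda>x. \<Sum>j\<le>N. c j * ffact x j) = (\<Sum>j\<le>N. c j * fact j)"
proof -
  have "(fwd_diff ^^ k) (\<lambda>x. \<Sum>j\<le>N. c j * ffact x j) 0 = c k * fact k" if "k \<le> N" for k
  proof -
    have "c j * (ffact (int j) k * ffact 0 (j - k)) = (if j = k then c k * fact k else 0)" for j
      by (cases "j < k") (auto simp: ffact_of_nat_eq_0 ffact_0_left ffact_of_nat_self)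
    then show ?thesis using that by (simp add: funpow_fwd_diff_ffact_series)
  qed
  then show ?thesis by (simp add: newton_coeff_sum_def)
qed

section \<open>Partitions whose blocks separate a given set\<close>

definition separating :: "'a set \<Rightarrow> 'a set set \<Rightarrow> bool" where
  "separating R P \<longleftrightarrow> (\<forall>B\<in>P. \<forall>i\<in>R. \<forall>j\<in>R. i \<in> B \<and> j \<in> B \<longrightarrow> i = j)"

definition sep_partitions :: "'a set \<Rightarrow> 'a set \<Rightarrow> nat \<Rightarrow> 'a set set set" where
  "sep_partitions R A j = {P. partition_on A P \<and> card P = j \<and> separating R P}"

lemma r_stirling_eq_card_sep_partitions:
  "r_stirling r n m = card (sep_partitions {1..r} {1..n} m)"
  unfolding r_stirling_def sep_partitions_def separating_def ..

lemma finite_sep_partitions: "finite A \<Longrightarrow> finite (sep_partitions R A j)"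
  by (rule finite_subset[OF _ finitely_many_partition_on]) (auto simp: sep_partitions_def)

lemma separating_insert_singleton:
  "a \<notin> R \<Longrightarrow> separating R (insert {a} Q) \<longleftrightarrow> separating R Q"
  by (auto simp: separating_def)

lemma partition_on_separating_self_iff:
  "partition_on R P \<and> separating R P \<longleftrightarrow> P = (\<lambda>x. {x}) ` R"
proof
  assume P: "partition_on R P \<and> separating R P"
  have singleton: "\<exists>x\<in>R. B = {x}" if "B \<in> P" for B
  proof -
    have "B \<noteq> {}" "B \<subseteq> R" using P that by (auto simp: partition_on_def)
    then obtain x where x: "x \<in> B" by blast
    have "y = x" if "y \<in> B" for y
      using P \<open>B \<in> P\<close> \<open>B \<subseteq> R\<close> x that unfolding separating_def by blast
    then show ?thesis using x \<open>B \<subseteq> R\<close> by blast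
  qed
  moreover have "{x} \<in> P" if "x \<in> R" for x
  proof -
    have "x \<in> \<Union>P" using P that by (simp add: partition_on_def)
    then obtain B where "B \<in> P" "x \<in> B" by blast
    then show ?thesis using singleton by fastforce
  qed
  ultimately show "P = (\<lambda>x. {x}) ` R" by blast
next
  assume "P = (\<lambda>x. {x}) ` R"
  then show "partition_on R P \<and> separating R P"
    by (auto simp: partition_on_singletons separating_def)
qed

lemma partition_on_Diff_block:
  assumes "partition_on A P" "X \<in> P"
  shows "partition_on (A - X) (P - {X})"
proof -
  have "disjnt X (\<Union>(P - {X}))"
    using partition_onD2[OF assms(1)] assms(2) by (auto simp: disjoint_def disjnt_def)
  then show ?thesis
    using assms partition_on_insert[of X "P - {X}" A] by (simp add: insert_absorb)
qed

lemma partition_on_insert_singleton: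
  assumes "partition_on A Q" "a \<notin> A"
  shows "partition_on (insert a A) (insert {a} Q)"
proof -
  have "disjnt {a} (\<Union>Q)" using assms by (simp add: disjnt_def partition_on_def)
  moreover have "insert a A - {a} = A" using assms(2) by simp
  ultimately show ?thesis using assms(1) by (simp add: partition_on_insert)
qed

definition insert_into_block :: "'a \<Rightarrow> 'a set set \<Rightarrow> 'a set \<Rightarrow> 'a set set" where
  "insert_into_block a Q X = insert (insert a X) (Q - {X})"

lemma partition_on_notin_block: "partition_on A Q \<Longrightarrow> a \<notin> A \<Longrightarrow> X \<in> Q \<Longrightarrow> a \<notin> X"
  by (auto simp: partition_on_def)

lemma partition_on_insert_into_block:
  assumes Q: "partition_on A Q" and a: "a \<notin> A" and X: "X \<in> Q"
  shows "partition_on (insert a A) (insert_into_block a Q X)"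
proof -
  have "disjnt (insert a X) (\<Union>(Q - {X}))"
    using Q a X by (auto simp: partition_on_def disjoint_def disjnt_def)
  moreover have "insert a A - insert a X = A - X" using a by blast
  moreover have "X \<subseteq> A" using Q X by (auto simp: partition_on_def)
  ultimately show ?thesis
    using partition_on_Diff_block[OF Q X] by (auto simp: partition_on_insert insert_into_block_def)
qed

lemma separating_insert_into_block:
  "a \<notin> R \<Longrightarrow> X \<in> Q \<Longrightarrow> separating R (insert_into_block a Q X) \<longleftrightarrow> separating R Q"
  unfolding separating_def insert_into_block_def by (metis Diff_iff insert_iff singletonD)

lemma card_insert_singleton_block:
  assumes "finite A" "partition_on A Q" "a \<notin> A"
  shows "card (insert {a} Q) = Suc (card Q)"
  using finite_elements[OF assms(1,2)] partition_on_notin_block[OF assms(2,3), of "{a}"]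
  by (subst card_insert_disjoint) auto

lemma card_insert_into_block:
  assumes "finite A" "partition_on A Q" "a \<notin> A" "X \<in> Q"
  shows "card (insert_into_block a Q X) = card Q"
proof -
  have "insert a X \<notin> Q - {X}" using partition_on_notin_block[OF assms(2,3)] by blast
  then show ?thesis
    using finite_elements[OF assms(1,2)] assms(4) card_Suc_Diff1[of Q X]
    by (simp add: insert_into_block_def)
qed

lemma singleton_notin_insert_into_block:
  assumes "partition_on A Q" "a \<notin> A" "X \<in> Q"
  shows "{a} \<notin> insert_into_block a Q X"
proof -
  have "X \<noteq> {}" using assms by (auto simp: partition_on_def)
  then show ?thesis
    using partition_on_notin_block[OF assms(1,2)] assms(3) by (auto simp: insert_into_block_def)
qed

lemma partition_on_insert_cases:
  assumes P: "partition_on (insert a A) P" and a: "a \<notin> A"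
  obtains "{a} \<in> P" "partition_on A (P - {{a}})"
    | Q X where "partition_on A Q" "X \<in> Q" "P = insert_into_block a Q X"
proof -
  have "a \<in> \<Union>P" using P by (simp add: partition_on_def)
  then obtain B where B: "B \<in> P" "a \<in> B" by blast
  have rest: "partition_on (insert a A - B) (P - {B})" by (rule partition_on_Diff_block[OF P B(1)])
  show thesis
  proof (cases "B = {a}")
    case True
    then show thesis using that(1) rest B a by simp
  next
    case False
    define X where "X = B - {a}"
    have "X \<noteq> {}" "X \<subseteq> A" "disjnt X (\<Union>(P - {B}))"
      using False B P by (auto simp: X_def partition_on_def disjoint_def disjnt_def)
    moreover have "A - X = insert a A - B" using B X_def \<open>X \<subseteq> A\<close> a by blast
    ultimately have Q: "partition_on A (insert X (P - {B}))"
      using rest by (simp add: partition_on_insert)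
    have "X \<notin> P - {B}"
      using \<open>X \<noteq> {}\<close> \<open>disjnt X (\<Union>(P - {B}))\<close> by (auto simp: disjnt_def)
    then have "insert X (P - {B}) - {X} = P - {B}" by blast
    moreover have "insert a X = B" using B X_def by blast
    ultimately have "P = insert_into_block a (insert X (P - {B})) X"
      using B(1) unfolding insert_into_block_def by (simp only:) blast
    then show thesis by (rule that(2)[OF Q insertI1])
  qed
qed

lemma insert_into_block_inj:
  assumes Q: "partition_on A Q" and Q': "partition_on A Q'" and a: "a \<notin> A"
    and X: "X \<in> Q" and X': "X' \<in> Q'"
    and eq: "insert_into_block a Q X = insert_into_block a Q' X'"
  shows "Q = Q' \<and> X = X'"
proof -
  define P where "P = insert_into_block a Q X"
  have "disjoint P" using partition_on_insert_into_block[OF Q a X] by (simp add: P_def partition_on_def)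
  moreover have "insert a X \<in> P" "insert a X' \<in> P"
    using eq by (auto simp: P_def insert_into_block_def)
  ultimately have "insert a X = insert a X'" by (auto dest: disjointD)
  moreover have "a \<notin> X" "a \<notin> X'" using Q Q' a X X' by (auto simp: partition_on_def)
  ultimately have XX': "X = X'" by (metis insert_ident)
  have "insert a X \<notin> Q - {X}" "insert a X \<notin> Q' - {X}"
    using Q Q' a X X' by (auto simp: partition_on_def)
  then have "Q - {X} = Q' - {X}" using eq XX' unfolding insert_into_block_def by (metis Diff_insert_absorb)
  then have "Q = Q'" using X X' XX' by (metis insert_Diff)
  with XX' show ?thesis by simp
qed

lemma sep_partitions_insert:
  assumes A: "finite A" and a: "a \<notin> A" "a \<notin> R"
  shows "sep_partitions R (insert a A) (Suc j) = insert {a} ` sep_partitions R A j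
    \<union> case_prod (insert_into_block a) ` (SIGMA Q:sep_partitions R A (Suc j). Q)"
    (is "_ = ?new \<union> ?old")
proof (intro equalityI subsetI)
  fix P assume "P \<in> sep_partitions R (insert a A) (Suc j)"
  then have P: "partition_on (insert a A) P" "card P = Suc j" "separating R P"
    by (auto simp: sep_partitions_def)
  from P(1) a(1) show "P \<in> ?new \<union> ?old"
  proof (cases rule: partition_on_insert_cases)
    case 1
    then have "P = insert {a} (P - {{a}})" by blast
    moreover have "P - {{a}} \<in> sep_partitions R A j"
      using 1 P card_insert_singleton_block[OF A 1(2) a(1)]
        separating_insert_singleton[OF a(2), of "P - {{a}}"] \<open>P = _\<close>
      by (simp add: sep_partitions_def)
    ultimately show ?thesis by blast
  next
    case (2 Q X)
    then have "Q \<in> sep_partitions R A (Suc j)"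
      using P card_insert_into_block[OF A _ a(1)] separating_insert_into_block[OF a(2)]
      by (simp add: sep_partitions_def)
    then show ?thesis using 2 by blast
  qed
next
  fix P assume "P \<in> ?new \<union> ?old"
  then show "P \<in> sep_partitions R (insert a A) (Suc j)"
  proof
    assume "P \<in> ?new"
    then obtain Q where "Q \<in> sep_partitions R A j" "P = insert {a} Q" by blast
    then show ?thesis
      using partition_on_insert_singleton[OF _ a(1)] card_insert_singleton_block[OF A _ a(1)]
        separating_insert_singleton[OF a(2)]
      by (simp add: sep_partitions_def)
  next
    assume "P \<in> ?old"
    then obtain Q X where "Q \<in> sep_partitions R A (Suc j)" "X \<in> Q" "P = insert_into_block a Q X"
      by blast
    then show ?thesis
      using partition_on_insert_into_block[OF _ a(1)] card_insert_into_block[OF A _ a(1)]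
        separating_insert_into_block[OF a(2)]
      by (simp add: sep_partitions_def)
  qed
qed

lemma card_sep_partitions_insert:
  assumes A: "finite A" and a: "a \<notin> A" "a \<notin> R"
  shows "card (sep_partitions R (insert a A) (Suc j))
    = Suc j * card (sep_partitions R A (Suc j)) + card (sep_partitions R A j)"
proof -
  let ?new = "insert {a} ` sep_partitions R A j"
  let ?S = "SIGMA Q:sep_partitions R A (Suc j). Q"
  let ?old = "case_prod (insert_into_block a) ` ?S"
  have "?new \<inter> ?old = {}"
    using singleton_notin_insert_into_block[OF _ a(1)] by (auto simp: sep_partitions_def)
  moreover have "card ?new = card (sep_partitions R A j)"
  proof (rule card_image, rule inj_onI)
    fix Q Q' assume "Q \<in> sep_partitions R A j" "Q' \<in> sep_partitions R A j"
      and "insert {a} Q = insert {a} Q'"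
    moreover have "{a} \<notin> Q" "{a} \<notin> Q'"
      using calculation partition_on_notin_block[OF _ a(1), of _ "{a}"] by (auto simp: sep_partitions_def)
    ultimately show "Q = Q'" by (metis Diff_insert_absorb)
  qed
  moreover have "card ?old = Suc j * card (sep_partitions R A (Suc j))"
  proof -
    have "inj_on (case_prod (insert_into_block a)) ?S"
      by (rule inj_onI) (auto simp: sep_partitions_def dest: insert_into_block_inj[OF _ _ a(1)])
    then have "card ?old = (\<Sum>Q\<in>sep_partitions R A (Suc j). card Q)"
      using finite_sep_partitions[OF A] finite_elements[OF A]
      by (simp add: card_image card_SigmaI sep_partitions_def)
    then show ?thesis by (simp add: sep_partitions_def)
  qed
  moreover have "finite ?new" "finite ?old"
    using finite_sep_partitions[OF A] finite_elements[OF A]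
    by (auto intro!: finite_SigmaI simp: sep_partitions_def)
  ultimately show ?thesis by (simp add: sep_partitions_insert[OF assms] card_Un_disjoint)
qed

lemma r_stirling_diag: "r_stirling r r j = (if j = r then 1 else 0)"
proof -
  define S where "S = (\<lambda>x. {x}) ` {1..r}"
  have "card S = r" unfolding S_def by (subst card_image) (auto simp: inj_on_def)
  moreover have "sep_partitions {1..r} {1..r} j = {P. P = S \<and> card P = j}"
    using partition_on_separating_self_iff[of "{1..r}"] by (auto simp: sep_partitions_def S_def)
  ultimately have "sep_partitions {1..r} {1..r} j = (if j = r then {S} else {})" by auto
  then show ?thesis by (simp add: r_stirling_eq_card_sep_partitions)
qed

lemma r_stirling_Suc_0: "r_stirling r (Suc N) 0 = 0"
proof -
  have False if "partition_on {1..Suc N} P" "card P = 0" for P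
  proof -
    have "P = {}" using finite_elements[OF _ that(1)] that(2) by simp
    then show False using that(1) by (simp add: partition_on_def)
  qed
  then have "sep_partitions {1..r} {1..Suc N} 0 = {}"
    by (auto simp: sep_partitions_def)
  then show ?thesis by (simp add: r_stirling_eq_card_sep_partitions)
qed

lemma r_stirling_Suc:
  assumes "r \<le> N"
  shows "r_stirling r (Suc N) (Suc j) = Suc j * r_stirling r N (Suc j) + r_stirling r N j"
proof -
  have "{1..Suc N} = insert (Suc N) {1..N}" by auto
  moreover have "Suc N \<notin> {1..N}" "Suc N \<notin> {1..r}" using assms by auto
  ultimately show ?thesis
    unfolding r_stirling_eq_card_sep_partitions by (simp add: card_sep_partitions_insert)
qed

lemma r_stirling_eq_0_below: "j < r \<Longrightarrow> r_stirling r (n + r) j = 0"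
proof (induction n arbitrary: j)
  case (Suc n)
  then show ?case by (cases j) (simp_all add: r_stirling_Suc_0 r_stirling_Suc)
qed (simp add: r_stirling_diag)

lemma r_stirling_eq_0_above: "n + r < j \<Longrightarrow> r_stirling r (n + r) j = 0"
proof (induction n arbitrary: j)
  case (Suc n)
  then show ?case by (cases j) (simp_all add: r_stirling_Suc)
qed (simp add: r_stirling_diag)

section \<open>r-Fubini numbers modulo powers of two\<close>

lemma power_mult_ffact_eq_r_stirling_sum:
  "x ^ n * ffact x r = (\<Sum>j\<le>n + r. int (r_stirling r (n + r) j) * ffact x j)"
proof (induction n)
  case 0
  have "(\<Sum>j\<le>r. int (r_stirling r r j) * ffact x j) = (\<Sum>j\<le>r. if j = r then ffact x j else 0)"
    by (rule sum.cong) (simp_all add: r_stirling_diag)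
  then show ?case by simp
next
  case (Suc n)
  define N where "N = n + r"
  define c where "c = (\<lambda>j. int (r_stirling r N j))"
  define c' where "c' = (\<lambda>j. int (r_stirling r (Suc N) j))"
  have "x ^ Suc n * ffact x r = (\<Sum>j\<le>N. c j * (x * ffact x j))"
    using Suc by (simp add: N_def c_def sum_distrib_left algebra_simps)
  also have "\<dots> = (\<Sum>j\<le>N. c j * ffact x (Suc j)) + (\<Sum>j\<le>N. int j * c j * ffact x j)"
    by (simp add: sum.distrib[symmetric] algebra_simps)
  also have "(\<Sum>j\<le>N. int j * c j * ffact x j) = (\<Sum>j\<le>N. int (Suc j) * c (Suc j) * ffact x (Suc j))"
  proof -
    have "c (Suc N) = 0" by (simp add: c_def N_def r_stirling_eq_0_above)
    then show ?thesis
      using sum.atMost_Suc_shift[of "\<lambda>j. int j * c j * ffact x j" N] by simp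
  qed
  also have "(\<Sum>j\<le>N. c j * ffact x (Suc j)) + \<dots> = (\<Sum>j\<le>N. c' (Suc j) * ffact x (Suc j))"
    by (simp add: c_def c'_def N_def r_stirling_Suc sum.distrib[symmetric] algebra_simps)
  also have "\<dots> = (\<Sum>j\<le>Suc N. c' j * ffact x j)"
    by (subst sum.atMost_Suc_shift) (simp add: c'_def r_stirling_Suc_0)
  finally show ?case by (simp add: N_def c'_def)
qed

lemma r_fubini_eq_newton_coeff_sum:
  "int (r_fubini n r) = newton_coeff_sum (n + r) (\<lambda>x. x ^ n * ffact x r)"
proof -
  have "int (r_fubini n r) = (\<Sum>j=0..n. fact (j + r) * int (r_stirling r (n + r) (j + r)))"
    by (simp add: r_fubini_def)
  also have "\<dots> = (\<Sum>j=0 + r..n + r. fact j * int (r_stirling r (n + r) j))"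
    by (rule sum.shift_bounds_cl_nat_ivl[symmetric])
  also have "\<dots> = (\<Sum>j\<le>n + r. fact j * int (r_stirling r (n + r) j))"
    unfolding add_0 by (rule sum.mono_neutral_left) (auto simp: r_stirling_eq_0_below)
  finally show ?thesis
    unfolding power_mult_ffact_eq_r_stirling_sum newton_coeff_sum_ffact_series
    by (simp add: mult.commute)
qed

lemma r_fubini_cong:
  "[int (r_fubini n r) = - (\<Sum>k=1..K. 2 ^ (k - 1) * ((- int k) ^ n * ffact (- int k) r))] (mod 2 ^ K)"
  unfolding r_fubini_eq_newton_coeff_sum power_mult_ffact_eq_r_stirling_sum
  by (rule newton_coeff_sum_cong[OF funpow_fwd_diff_ffact_series_vanish])

lemma odd_power_two_power_minus_one_dvd:
  fixes k :: int
  assumes "odd k"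
  shows "2 ^ t * (k\<^sup>2 - 1) dvd k ^ 2 ^ (t + 1) - 1"
proof (induction t)
  case (Suc t)
  have "(2::nat) ^ (Suc t + 1) = 2 ^ (t + 1) * 2" by simp
  then have "k ^ 2 ^ (Suc t + 1) = (k ^ 2 ^ (t + 1))\<^sup>2" by (simp only: power_mult)
  then have eq: "k ^ 2 ^ (Suc t + 1) - 1 = (k ^ 2 ^ (t + 1) - 1) * (k ^ 2 ^ (t + 1) + 1)"
    by (simp add: power2_eq_square algebra_simps)
  have "2 dvd k ^ 2 ^ (t + 1) + 1" using assms by simp
  with Suc.IH have "2 ^ t * (k\<^sup>2 - 1) * 2 dvd (k ^ 2 ^ (t + 1) - 1) * (k ^ 2 ^ (t + 1) + 1)"
    by (rule mult_dvd_mono)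
  then show ?case unfolding eq by (simp add: mult_ac)
qed simp

lemma two_power_dvd_odd_weight:
  assumes "odd k" "s \<ge> 1"
  shows "(2::int) ^ (s + 6) dvd 2 ^ (k - 1) * 2 ^ (s - 1) * ((int k)\<^sup>2 - 1) * (int k + 1)"
proof (cases "k \<ge> 7")
  case True
  have "even ((int k)\<^sup>2 - 1)" using assms(1) by simp
  then obtain y where y: "(int k)\<^sup>2 - 1 = 2 * y" by blast
  have eq: "(2::int) ^ (k - 1) * 2 ^ (s - 1) * ((int k)\<^sup>2 - 1) * (int k + 1)
      = 2 ^ (k - 1 + (s - 1) + 1) * (y * (int k + 1))"
    by (simp add: y power_add)
  have "(2::int) ^ (s + 6) dvd 2 ^ (k - 1 + (s - 1) + 1)"
    using True assms(2) by (intro le_imp_power_dvd) auto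
  then show ?thesis unfolding eq by (rule dvd_mult2)
next
  case False
  with assms(1) have "k = 1 \<or> k = 3 \<or> k = 5" by presburger
  moreover obtain t where "s = Suc t" using assms(2) by (cases s) auto
  ultimately show ?thesis by (auto simp: power_add)
qed

lemma weighted_term_cong:
  assumes r: "r \<ge> 2" and s: "s \<ge> 1" and n: "s + 6 \<le> n + 1"
  shows "[2 ^ (k - 1) * ((- int k) ^ (n + 2 ^ s) * ffact (- int k) r)
    = 2 ^ (k - 1) * ((- int k) ^ n * ffact (- int k) r)] (mod 2 ^ (s + 6))"
proof -
  have "ffact (- int k) 2 dvd ffact (- int k) r" using r by (rule ffact_dvd)
  then have k_dvd: "int k * (int k + 1) dvd ffact (- int k) r"
    by (simp add: numeral_2_eq_2 algebra_simps)
  have diff: "2 ^ (k - 1) * ((- int k) ^ (n + 2 ^ s) * ffact (- int k) r)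
      - 2 ^ (k - 1) * ((- int k) ^ n * ffact (- int k) r)
    = 2 ^ (k - 1) * (- int k) ^ n * ((- int k) ^ 2 ^ s - 1) * ffact (- int k) r"
    by (simp add: power_add algebra_simps)
  have "(2::int) ^ (s + 6) dvd 2 ^ (k - 1) * (- int k) ^ n * ((- int k) ^ 2 ^ s - 1) * ffact (- int k) r"
  proof (cases "even k")
    case True
    then have "2 ^ n dvd (- int k) ^ n" by (simp add: dvd_power_same)
    moreover have "2 dvd ffact (- int k) r" using True k_dvd by (auto intro: dvd_trans)
    ultimately have "2 ^ n * 2 dvd (- int k) ^ n * ((- int k) ^ 2 ^ s - 1) * ffact (- int k) r"
      by (intro mult_dvd_mono) auto
    moreover have "(2::int) ^ (s + 6) dvd 2 ^ n * 2"
      using n le_imp_power_dvd[of "s + 6" "n + 1" "2::int"] by (simp add: mult.commute)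
    ultimately show ?thesis by (auto simp: mult.assoc intro: dvd_trans)
  next
    case False
    have "(- int k) ^ 2 ^ s = int k ^ 2 ^ s" using s by simp
    moreover have "2 ^ (s - 1) * ((int k)\<^sup>2 - 1) dvd int k ^ 2 ^ s - 1"
      using odd_power_two_power_minus_one_dvd[of "int k" "s - 1"] False s by simp
    moreover have "int k + 1 dvd ffact (- int k) r" using k_dvd by (auto intro: dvd_trans)
    ultimately have "2 ^ (k - 1) * (2 ^ (s - 1) * ((int k)\<^sup>2 - 1)) * (int k + 1)
        dvd 2 ^ (k - 1) * ((- int k) ^ n * ((- int k) ^ 2 ^ s - 1)) * ffact (- int k) r"
      by (intro mult_dvd_mono dvd_mult) auto
    with two_power_dvd_odd_weight[OF False s] show ?thesis
      by (auto simp: mult.assoc intro: dvd_trans)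
  qed
  then show ?thesis unfolding cong_iff_dvd_diff diff .
qed

theorem theorem4p7:
  fixes r m n :: nat
  assumes "r \<ge> 2" and "m \<ge> 7" and "n \<ge> m - 1"
  shows "r_fubini (n + 2 ^ (m - 6)) r mod 2 ^ m = r_fubini n r mod 2 ^ m"
proof -
  define s where "s = m - 6"
  have m: "m = s + 6" and "s \<ge> 1" "s + 6 \<le> n + 1" using assms by (auto simp: s_def)
  define tail where "tail q = (\<Sum>k=1..m. 2 ^ (k - 1) * ((- int k) ^ q * ffact (- int k) r))" for q
  have "[int (r_fubini (n + 2 ^ s) r) = - tail (n + 2 ^ s)] (mod 2 ^ m)"
    unfolding tail_def by (rule r_fubini_cong)
  also have "[- tail (n + 2 ^ s) = - tail n] (mod 2 ^ m)"
    unfolding cong_minus_minus_iff tail_def m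
    by (intro cong_sum weighted_term_cong assms(1) \<open>s \<ge> 1\<close> \<open>s + 6 \<le> n + 1\<close>)
  also have "[- tail n = int (r_fubini n r)] (mod 2 ^ m)"
    unfolding tail_def by (rule cong_sym, rule r_fubini_cong)
  finally have "[r_fubini (n + 2 ^ s) r = r_fubini n r] (mod 2 ^ m)"
    by (simp flip: cong_int_iff)
  then show ?thesis by (simp add: s_def cong_def)
qed

end
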